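(* Let $d\in\mathbb{N}$, $\ell\in\mathbb{N}_0$, let $k$ be a stationary product kernel on $\mathbb{R}^d$, and let $K_{\mathcal{G}_{\ell,d}}$ be the kernel matrix of $k$ on the $d$-dimensional sparse grid $\mathcal{G}_{\ell,d}$ of resolution $\ell$. For any vector $\mathbf v\in\mathbb{R}^{|\mathcal{G}_{\ell,d}|}$, the Sparse Grid Kernel-MVM Algorithm (described in the context) computes $K_{\mathcal{G}_{\ell,d}}\mathbf v$, and it does so in $O(\ell^{d}2^{\ell})$ time.
   Context: Grids. For $l\in\mathbb{N}_0$ let $\Omega_l=\{i/2^{l+1} : 1\le i\le 2^{l+1},\ i \text{ odd}\}\subset[0,1]$ (so $|\Omega_l|=2^l$ and $\Omega_l\cap\Omega_{l'}=\emptyset$ for $l\neq l'$). For $\mathbf l\in\mathbb{N}_0^d$ let $\Omega_{\mathbf l}=\Omega_{l_1}\times\cdots\times\Omega_{l_d}$. The sparse grid is $\mathcal{G}_{\ell,d}=\bigcup_{\mathbf l\in\mathbb{N}_0^d,\ \|\mathbf l\|_1\le\ell}\Omega_{\mathbf l}\subset[0,1]^d$. One has $\mathcal{G}_{\ell',d}\subseteq\mathcal{G}_{\ell,d}$ for $\ell'\le\ell$, $\mathcal{G}_{\ell,1}=\bigcup_{i=0}^{\ell}\Omega_i$, and for $d\ge2$, $\mathcal{G}_{\ell,d}=\bigcup_{i=0}^{\ell}\Omega_i\times\mathcal{G}_{\ell-i,d-1}$ (a disjoint union). Kernel. A stationary product kernel is $k(\mathbf x,\mathbf x')=\prod_{j=1}^d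 k_j(x_j-x_j')$ for one-dimensional functions $k_j$. For a finite set $U$, $K_U=[k(\mathbf x,\mathbf x')]_{\mathbf x,\mathbf x'\in U}$ with rows/columns indexed by $U$ in a fixed order. In dimension 1, $K_{\mathcal{G}_{\ell,1}}$ (equally spaced points, stationary kernel) is Toeplitz and is multiplied by a vector using fast (FFT-based) Toeplitz multiplication in $O(\ell2^\ell)$ time. Selection matrices. For finite $U\subseteq V$, $\mathcal S_{U,V}\in\{0,1\}^{|U|\times|V|}$ has entry $(a,b)$ equal to $1$ iff the $a$-th element of $U$ equals the $b$-th element of $V$, and $\mathcal S_{V,U}=\mathcal S_{U,V}^T$ (selecting entries, resp. inserting zeros). Algorithm $\mathbf{mvm}(K_{\mathcal{G}_{\ell,d}},\mathbf v)$: For each $i=0,\dots,\ell$ let $V_i$ be the $|\Omega_i|\times|\mathcal{G}_{\ell-i,d-1}|$ matrix obtained by reshaping the entries of $\mathbf v$ indexed by $\Omega_i\times\mathcal{G}_{\ell-i,d-1}$ (row index in $\Omega_i$, column index in $\mathcal{G}_{\ell-i,d-1}$). If $d=1$, return $K_{\mathcal{G}_{\ell,1}}\mathbf v$ (Toeplitz multiplication). Otherwise: (pre-computation) for $i=0,\dots,\ell$ set $\overline A_i=K_{\mathcal{G}_{i,1}}\mathcal S_{\mathcal{G}_{i,1},\Omega_i}V_i$ and $\overline B_i^T=\mathbf{mvm}(K_{\mathcal{G}_{\ell-i,d-1}},V_i^T)$ (recursive multiplication applied to each column); (main loop) for $i=0,\dots,\ell$ set $A_i^T=\mathbf{mvm}\big(K_{\mathcal{G}_{\ell-i,d-1}},\big(\sum_{j>i}\mathcal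 S_{\Omega_i,\mathcal{G}_{j,1}}\overline A_j\,\mathcal S_{\mathcal{G}_{\ell-j,d-1},\mathcal{G}_{\ell-i,d-1}}\big)^T\big)$, $B_i=\mathcal S_{\Omega_i,\mathcal{G}_{i,1}}K_{\mathcal{G}_{i,1}}\big(\sum_{j\le i}\mathcal S_{\mathcal{G}_{i,1},\Omega_j}\overline B_j\,\mathcal S_{\mathcal{G}_{\ell-j,d-1},\mathcal{G}_{\ell-i,d-1}}\big)$, and $\mathbf u_i=\mathrm{vec}(A_i)+\mathrm{vec}(B_i)$; the output $\mathbf u$ is the vector whose entries indexed by $\Omega_i\times\mathcal{G}_{\ell-i,d-1}$ are $\mathbf u_i$ (with vectorization consistent with the reshaping used for $V_i$). *)

theory Defs
  imports Complex_Main
begin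

definition Omega :: "nat \<Rightarrow> real set" where
  "Omega l = {real i / 2 ^ (l + 1) | i. 1 \<le> i \<and> i \<le> 2 ^ (l + 1) \<and> odd i}"

definition sparse_grid :: "nat \<Rightarrow> nat \<Rightarrow> real list set" where
  "sparse_grid ell d = {x. length x = d \<and>
     (\<exists>ls :: nat list. length ls = d \<and> sum_list ls \<le> ell \<and> (\<forall>j<d. x ! j \<in> Omega (ls ! j)))}"

definition grid1 :: "nat \<Rightarrow> real set" where
  "grid1 ell = (\<Union>i\<le>ell. Omega i)"

definition prod_kernel :: "(nat \<Rightarrow> real \<Rightarrow> real) \<Rightarrow> real list \<Rightarrow> real list \<Rightarrow> real" where
  "prod_kernel kf x y = (\<Prod>j<length x. kf j (x ! j - y ! j))"

definition kernel_mvm :: "(nat \<Rightarrow> real \<Rightarrow> real) \<Rightarrow> real list set \<Rightarrow> (real list \<Rightarrow> real) \<Rightarrow> real list \<Rightarrow> real" where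
  "kernel_mvm kf U v x = (\<Sum>y\<in>U. prod_kernel kf x y * v y)"

text \<open>One-dimensional Toeplitz multiplication K_{G_{m,1}} w (black box) and its cost
  (FFT-based, O(m 2^m)).\<close>
definition toeplitz_mvm :: "(real \<Rightarrow> real) \<Rightarrow> nat \<Rightarrow> (real \<Rightarrow> real) \<Rightarrow> real \<Rightarrow> real" where
  "toeplitz_mvm k m w t = (\<Sum>s\<in>grid1 m. k (t - s) * w s)"

definition toeplitz_cost :: "nat \<Rightarrow> nat" where
  "toeplitz_cost m = (m + 1) * 2 ^ (m + 1)"

text \<open>Matrices V_i etc. are represented as functions
  of (row point, column point); selection matrices become restriction / zero-extension.\<close>
definition sg_step ::
  "(nat \<Rightarrow> (nat \<Rightarrow> real \<Rightarrow> real) \<Rightarrow> (real list \<Rightarrow> real) \<Rightarrow> (real list \<Rightarrow> real) \<times> nat)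
   \<Rightarrow> nat \<Rightarrow> nat \<Rightarrow> (nat \<Rightarrow> real \<Rightarrow> real) \<Rightarrow> (real list \<Rightarrow> real) \<Rightarrow> (real list \<Rightarrow> real) \<times> nat" where
  "sg_step rec d' ell kf v = (let
     kf' = (\<lambda>j. kf (Suc j));
     G = (\<lambda>m. sparse_grid m d');
     \<comment> \<open>precomputation: Abar_i = K_{G_{i,1}} S V_i, rows t in G_{i,1}, columns y\<close>
     Abar = (\<lambda>j t y. toeplitz_mvm (kf 0) j (\<lambda>s. if s \<in> Omega j then v (s # y) else 0) t);
     \<comment> \<open>precomputation: Bbar_i^T = mvm(K_{G_{ell-i,d-1}}, V_i^T), row x1 in Omega_i\<close>
     Bbar = (\<lambda>j x1. fst (rec (ell - j) kf' (\<lambda>y. v (x1 # y))));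
     M = (\<lambda>i x1 y. \<Sum>j\<in>{i<..ell}. if y \<in> G (ell - j) then Abar j x1 y else 0);
     A = (\<lambda>i x1. fst (rec (ell - i) kf' (M i x1)));
     N = (\<lambda>i t y. \<Sum>j\<in>{..i}. if t \<in> Omega j then Bbar j t y else 0);
     B = (\<lambda>i x1 y. toeplitz_mvm (kf 0) i (\<lambda>t. N i t y) x1);
     u = (\<lambda>x. \<Sum>i\<in>{..ell}. if hd x \<in> Omega i then A i (hd x) (tl x) + B i (hd x) (tl x) else 0);
     cost =
       (\<Sum>i\<le>ell. card (G (ell - i)) * toeplitz_cost i)
     + (\<Sum>i\<le>ell. \<Sum>x1\<in>Omega i. snd (rec (ell - i) kf' (\<lambda>y. v (x1 # y))))
     + (\<Sum>i\<le>ell. \<Sum>j\<in>{i<..ell}. card (Omega i) * card (G (ell - j)))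
     + (\<Sum>i\<le>ell. \<Sum>x1\<in>Omega i. snd (rec (ell - i) kf' (M i x1)))
     + (\<Sum>i\<le>ell. \<Sum>j\<le>i. card (Omega j) * card (G (ell - i)))
     + (\<Sum>i\<le>ell. card (G (ell - i)) * toeplitz_cost i)
     + (\<Sum>i\<le>ell. card (Omega i) * card (G (ell - i)))
   in (u, cost))"

primrec sg_mvm :: "nat \<Rightarrow> nat \<Rightarrow> (nat \<Rightarrow> real \<Rightarrow> real) \<Rightarrow> (real list \<Rightarrow> real) \<Rightarrow> (real list \<Rightarrow> real) \<times> nat" where
  "sg_mvm 0 ell kf v = (v, 0)"
| "sg_mvm (Suc d') ell kf v =
     (if d' = 0 then ((\<lambda>x. toeplitz_mvm (kf 0) ell (\<lambda>s. v [s]) (hd x)), toeplitz_cost ell)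
      else sg_step (sg_mvm d') d' ell kf v)"

end

theory Submission
  imports Defs
begin

text \<open>
  Split a target point as a # y with a in Omega_i, y in G_{ell-i,d-1}, and a source point as
  s # z with s in Omega_j, z in G_{ell-j,d-1}. Because the grids G_{m,d-1} are nested in m,
  for j > i every such z lies in G_{ell-i,d-1}: the block can be summed first over s by a
  Toeplitz product on G_{j,1} and then over z by the recursive call on G_{ell-i,d-1} (this is A_i).
  For j <= i the target y lies in G_{ell-j,d-1}: the recursive call on that grid comes first and
  the Toeplitz product on G_{i,1}, which contains Omega_j, last (this is B_i).
  For the cost, |G_{m,d-1}| <= 2 (m+1)^(d-2) 2^m, so each of the at most (ell+1)^2 non-recursive
  summands, of size O(ell 2^i |G_{m,d-1}|) with i + m <= ell, is O(ell^(d-1) 2^ell); the recursive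
  calls cost O(ell^d 2^ell) by induction on d.
\<close>

lemma Omega_subset_image: "Omega l \<subseteq> (\<lambda>k::nat. real (2*k+1) / 2^(l+1)) ` {..<2^l}"
proof
  fix x assume "x \<in> Omega l"
  then obtain i where i: "x = real i / 2^(l+1)" "i \<le> 2^(l+1)" "odd i"
    unfolding Omega_def by auto
  then obtain k where k: "i = 2*k+1" by (meson oddE)
  with i have "k < 2^l" by (auto simp: power_Suc)
  with i k show "x \<in> (\<lambda>k::nat. real (2*k+1) / 2^(l+1)) ` {..<2^l}" by auto
qed

lemma finite_Omega [simp]: "finite (Omega l)"
  using Omega_subset_image finite_subset by blast

lemma card_Omega_le: "card (Omega l) \<le> 2^l"
proof -
  have "card (Omega l) \<le> card ((\<lambda>k::nat. real (2*k+1) / 2^(l+1)) ` {..<2^l})"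
    by (rule card_mono[OF _ Omega_subset_image]) auto
  also have "\<dots> \<le> 2^l"
    using card_image_le[of "{..<(2::nat)^l}"] by simp
  finally show ?thesis .
qed

lemma Omega_disjoint_less:
  assumes "i < j" "x \<in> Omega i"
  shows "x \<notin> Omega j"
proof
  assume "x \<in> Omega j"
  then obtain b where b: "x = real b / 2^(j+1)" "odd b" unfolding Omega_def by auto
  obtain a where a: "x = real a / 2^(i+1)" using assms(2) unfolding Omega_def by auto
  have "real a * 2^(j+1) = real b * 2^(i+1)"
    using a b by (simp add: field_simps)
  moreover have "(2::real)^(j+1) = 2^(j-i) * 2^(i+1)"
    using assms(1) by (simp flip: power_add)
  ultimately have "real (a * 2^(j-i)) * 2^(i+1) = real b * 2^(i+1)"
    by (simp add: mult.assoc)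
  hence "real (a * 2^(j-i)) = real b" by simp
  hence "b = a * 2^(j-i)" by (simp only: of_nat_eq_iff)
  with assms(1) b(2) show False by simp
qed

lemma Omega_disjoint: "x \<in> Omega i \<Longrightarrow> x \<in> Omega j \<Longrightarrow> i = j"
  by (metis Omega_disjoint_less linorder_neqE_nat)

lemma finite_grid1 [simp]: "finite (grid1 m)"
  unfolding grid1_def by auto

lemma Omega_subset_grid1: "j \<le> m \<Longrightarrow> Omega j \<subseteq> grid1 m"
  unfolding grid1_def by auto

lemma sum_grid1: "sum f (grid1 m) = (\<Sum>j\<le>m. sum f (Omega j))"
  unfolding grid1_def by (rule sum.UNION_disjoint) (auto dest: Omega_disjoint)

lemma length_sparse_grid: "x \<in> sparse_grid m d \<Longrightarrow> length x = d"
  unfolding sparse_grid_def by auto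

lemma sparse_grid_0: "sparse_grid ell 0 = {[]}"
  unfolding sparse_grid_def by auto

lemma sparse_grid_mono: "m \<le> n \<Longrightarrow> sparse_grid m d \<subseteq> sparse_grid n d"
  unfolding sparse_grid_def by fastforce

lemma Cons_in_sparse_grid_Suc_iff:
  "a # y \<in> sparse_grid ell (Suc d) \<longleftrightarrow>
     (\<exists>i\<le>ell. a \<in> Omega i \<and> y \<in> sparse_grid (ell - i) d)"
proof
  assume "a # y \<in> sparse_grid ell (Suc d)"
  then obtain ls where ls: "length y = d" "length ls = Suc d" "sum_list ls \<le> ell"
      "\<forall>j<Suc d. (a # y) ! j \<in> Omega (ls ! j)"
    unfolding sparse_grid_def by auto
  then obtain l ls' where l: "ls = l # ls'" by (cases ls) auto
  have "a \<in> Omega l" using ls(4) l by (metis nth_Cons_0 zero_less_Suc)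
  moreover have "y \<in> sparse_grid (ell - l) d"
    unfolding sparse_grid_def using ls l by (auto intro!: exI[of _ ls'])
  moreover have "l \<le> ell" using ls(3) l by simp
  ultimately show "\<exists>i\<le>ell. a \<in> Omega i \<and> y \<in> sparse_grid (ell - i) d" by blast
next
  assume "\<exists>i\<le>ell. a \<in> Omega i \<and> y \<in> sparse_grid (ell - i) d"
  then obtain i ls' where "i \<le> ell" "a \<in> Omega i" "length y = d" "length ls' = d"
      "sum_list ls' \<le> ell - i" "\<forall>j<d. y ! j \<in> Omega (ls' ! j)"
    unfolding sparse_grid_def by auto
  then show "a # y \<in> sparse_grid ell (Suc d)"
    unfolding sparse_grid_def
    by (auto intro!: exI[of _ "i # ls'"] simp: nth_Cons less_Suc_eq_0_disj)
qed

lemma sparse_grid_Suc: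
  "sparse_grid ell (Suc d) = (\<Union>i\<le>ell. (\<lambda>(a, y). a # y) ` (Omega i \<times> sparse_grid (ell - i) d))"
proof (intro set_eqI iffI)
  fix x assume x: "x \<in> sparse_grid ell (Suc d)"
  then obtain a y where xy: "x = a # y"
    using length_sparse_grid by (metis length_Suc_conv)
  with x obtain i where "i \<le> ell" "a \<in> Omega i" "y \<in> sparse_grid (ell - i) d"
    using Cons_in_sparse_grid_Suc_iff by blast
  with xy show "x \<in> (\<Union>i\<le>ell. (\<lambda>(a, y). a # y) ` (Omega i \<times> sparse_grid (ell - i) d))"
    by blast
next
  fix x assume "x \<in> (\<Union>i\<le>ell. (\<lambda>(a, y). a # y) ` (Omega i \<times> sparse_grid (ell - i) d))"
  then obtain i a y where "i \<le> ell" "a \<in> Omega i" "y \<in> sparse_grid (ell - i) d" "x = a # y"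
    by auto
  then show "x \<in> sparse_grid ell (Suc d)"
    using Cons_in_sparse_grid_Suc_iff by blast
qed

lemma finite_sparse_grid [simp]: "finite (sparse_grid ell d)"
  by (induction d arbitrary: ell) (auto simp: sparse_grid_0 sparse_grid_Suc)

lemma sum_sparse_grid_Suc:
  "sum f (sparse_grid ell (Suc d)) =
     (\<Sum>j\<le>ell. \<Sum>s\<in>Omega j. \<Sum>z\<in>sparse_grid (ell - j) d. f (s # z))"
proof -
  have "sum f (sparse_grid ell (Suc d)) =
      (\<Sum>j\<le>ell. sum f ((\<lambda>(a, y). a # y) ` (Omega j \<times> sparse_grid (ell - j) d)))"
    unfolding sparse_grid_Suc by (rule sum.UNION_disjoint) (auto dest: Omega_disjoint)
  also have "\<dots> = (\<Sum>j\<le>ell. \<Sum>(s, z)\<in>Omega j \<times> sparse_grid (ell - j) d. f (s # z))"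
    by (intro sum.cong refl, subst sum.reindex) (auto simp: inj_on_def case_prod_beta)
  finally show ?thesis
    by (simp add: sum.cartesian_product)
qed

lemma card_sparse_grid_Suc:
  "card (sparse_grid ell (Suc d)) = (\<Sum>j\<le>ell. card (Omega j) * card (sparse_grid (ell - j) d))"
  using sum_sparse_grid_Suc[of "\<lambda>_. 1::nat" ell d] by simp

lemma pow2_mult_growth_le:
  assumes "i + m \<le> n"
  shows "2^i * (c * (m+1)^k * 2^m) \<le> c * (n+1)^k * (2::nat)^n"
proof -
  have "(m+1)^k \<le> (n+1)^k" using assms by (simp add: power_mono)
  moreover have "(2::nat)^i * 2^m \<le> 2^n" using assms by (simp flip: power_add)
  ultimately have "c * (m+1)^k * (2^i * 2^m) \<le> c * (n+1)^k * (2::nat)^n"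
    by (intro mult_le_mono) auto
  then show ?thesis by (simp only: ac_simps)
qed

lemma card_sparse_grid_le: "card (sparse_grid m (Suc e)) \<le> 2 * (m+1)^e * 2^m"
proof (induction e arbitrary: m)
  case 0
  have "card (sparse_grid m (Suc 0)) = (\<Sum>j\<le>m. card (Omega j))"
    by (simp add: card_sparse_grid_Suc sparse_grid_0)
  also have "\<dots> \<le> (\<Sum>j\<le>m. 2^j)"
    by (intro sum_mono card_Omega_le)
  also have "\<dots> = 2 * 2^m - 1"
    using sum_power2[of "Suc m"] by (simp add: atLeast0LessThan lessThan_Suc_atMost)
  finally show ?case by simp
next
  case (Suc e)
  have "card (sparse_grid m (Suc (Suc e))) =
      (\<Sum>j\<le>m. card (Omega j) * card (sparse_grid (m-j) (Suc e)))"
    by (rule card_sparse_grid_Suc)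
  also have "\<dots> \<le> (\<Sum>j\<le>m. 2^j * (2 * (m-j+1)^e * 2^(m-j)))"
    by (intro sum_mono mult_le_mono card_Omega_le Suc.IH)
  also have "\<dots> \<le> (\<Sum>j\<le>m. 2 * (m+1)^e * 2^m)"
    by (intro sum_mono pow2_mult_growth_le) auto
  also have "\<dots> = 2 * (m+1)^Suc e * 2^m"
    by (simp add: algebra_simps)
  finally show ?case .
qed

lemma prod_kernel_Cons:
  "length y = length z \<Longrightarrow>
     prod_kernel kf (a # y) (b # z) = kf 0 (a - b) * prod_kernel (\<lambda>j. kf (Suc j)) y z"
  unfolding prod_kernel_def length_Cons prod.lessThan_Suc_shift by simp

lemma kernel_mvm_sum:
  "kernel_mvm kf U (\<lambda>z. \<Sum>j\<in>J. w j z) x = (\<Sum>j\<in>J. kernel_mvm kf U (w j) x)"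
  unfolding kernel_mvm_def sum_distrib_left by (rule sum.swap)

lemma kernel_mvm_cmult: "kernel_mvm kf U (\<lambda>z. c * w z) x = c * kernel_mvm kf U w x"
  unfolding kernel_mvm_def sum_distrib_left by (simp add: ac_simps)

lemma kernel_mvm_restrict:
  assumes "finite V" "U \<subseteq> V"
  shows "kernel_mvm kf V (\<lambda>z. if z \<in> U then w z else 0) x = kernel_mvm kf U w x"
proof -
  have "kernel_mvm kf V (\<lambda>z. if z \<in> U then w z else 0) x =
      (\<Sum>z\<in>V. if z \<in> U then prod_kernel kf x z * w z else 0)"
    unfolding kernel_mvm_def by (rule sum.cong) auto
  also have "\<dots> = kernel_mvm kf U w x"
    unfolding kernel_mvm_def sum.inter_restrict[OF assms(1), symmetric]
    using assms(2) by (simp add: Int_absorb1)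
  finally show ?thesis .
qed

lemma kernel_mvm_sparse_grid_Suc:
  assumes "length y = d"
  shows "kernel_mvm kf (sparse_grid ell (Suc d)) v (a # y) =
    (\<Sum>j\<le>ell. \<Sum>s\<in>Omega j.
       kf 0 (a - s) * kernel_mvm (\<lambda>j. kf (Suc j)) (sparse_grid (ell - j) d) (\<lambda>z. v (s # z)) y)"
  unfolding kernel_mvm_def sum_sparse_grid_Suc sum_distrib_left
  using assms by (intro sum.cong refl) (simp add: prod_kernel_Cons length_sparse_grid)

lemma toeplitz_mvm_sum:
  "toeplitz_mvm k m (\<lambda>t. \<Sum>j\<in>J. w j t) a = (\<Sum>j\<in>J. toeplitz_mvm k m (w j) a)"
  unfolding toeplitz_mvm_def sum_distrib_left by (rule sum.swap)

lemma toeplitz_mvm_restrict: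
  assumes "j \<le> m"
  shows "toeplitz_mvm k m (\<lambda>s. if s \<in> Omega j then g s else 0) t = (\<Sum>s\<in>Omega j. k (t - s) * g s)"
proof -
  have "toeplitz_mvm k m (\<lambda>s. if s \<in> Omega j then g s else 0) t =
      (\<Sum>s\<in>grid1 m. if s \<in> Omega j then k (t - s) * g s else 0)"
    unfolding toeplitz_mvm_def by (rule sum.cong) auto
  also have "\<dots> = (\<Sum>s\<in>Omega j. k (t - s) * g s)"
    unfolding sum.inter_restrict[OF finite_grid1, symmetric]
    using Omega_subset_grid1[OF assms] by (simp add: Int_absorb1)
  finally show ?thesis .
qed

definition computes_kernel_mvm ::
  "nat \<Rightarrow> (nat \<Rightarrow> (nat \<Rightarrow> real \<Rightarrow> real) \<Rightarrow> (real list \<Rightarrow> real) \<Rightarrow> (real list \<Rightarrow> real) \<times> nat)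
     \<Rightarrow> bool" where
  "computes_kernel_mvm d alg \<longleftrightarrow>
     (\<forall>ell kf v. \<forall>x\<in>sparse_grid ell d. fst (alg ell kf v) x = kernel_mvm kf (sparse_grid ell d) v x)"

lemma fst_sg_step_Cons:
  assumes "i \<le> ell" "a \<in> Omega i"
  shows "fst (sg_step rec d' ell kf v) (a # y) =
    fst (rec (ell - i) (\<lambda>j. kf (Suc j))
      (\<lambda>z. \<Sum>j\<in>{i<..ell}. if z \<in> sparse_grid (ell - j) d'
             then toeplitz_mvm (kf 0) j (\<lambda>s. if s \<in> Omega j then v (s # z) else 0) a else 0)) y
    + toeplitz_mvm (kf 0) i
      (\<lambda>t. \<Sum>j\<le>i. if t \<in> Omega j
             then fst (rec (ell - j) (\<lambda>j. kf (Suc j)) (\<lambda>z. v (t # z))) y else 0) a"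
proof -
  have "a \<in> Omega i' \<longleftrightarrow> i' = i" for i'
    using assms(2) Omega_disjoint by blast
  with assms(1) show ?thesis
    unfolding sg_step_def Let_def by (simp cong: if_cong)
qed

lemma computes_kernel_mvm_sg_step:
  assumes rec: "computes_kernel_mvm d' rec"
  shows "computes_kernel_mvm (Suc d') (sg_step rec d')"
  unfolding computes_kernel_mvm_def
proof (intro allI ballI)
  fix ell :: nat and kf :: "nat \<Rightarrow> real \<Rightarrow> real" and v :: "real list \<Rightarrow> real" and x
  assume x: "x \<in> sparse_grid ell (Suc d')"
  then obtain a y where xy: "x = a # y"
    using length_sparse_grid by (metis length_Suc_conv)
  with x obtain i where i: "i \<le> ell" "a \<in> Omega i" "y \<in> sparse_grid (ell - i) d'"
    using Cons_in_sparse_grid_Suc_iff by blast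
  define kf' where "kf' = (\<lambda>j. kf (Suc j))"
  define G where "G = (\<lambda>m. sparse_grid m d')"
  define F where
    "F = (\<lambda>j. \<Sum>s\<in>Omega j. kf 0 (a - s) * kernel_mvm kf' (G (ell - j)) (\<lambda>z. v (s # z)) y)"
  have rec_G: "fst (rec m kf' w) z = kernel_mvm kf' (G m) w z" if "z \<in> G m" for m w z
    using rec that unfolding computes_kernel_mvm_def G_def by blast
  have blocks_above: "fst (rec (ell - i) kf'
      (\<lambda>z. \<Sum>j\<in>{i<..ell}. if z \<in> G (ell - j)
             then toeplitz_mvm (kf 0) j (\<lambda>s. if s \<in> Omega j then v (s # z) else 0) a else 0)) y
    = (\<Sum>j\<in>{i<..ell}. F j)"
  proof -
    have "G (ell - j) \<subseteq> G (ell - i)" if "j \<in> {i<..ell}" for j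
      using that unfolding G_def by (intro sparse_grid_mono) auto
    then show ?thesis
      using i(3)
      by (simp add: rec_G G_def kernel_mvm_sum kernel_mvm_restrict toeplitz_mvm_restrict
          kernel_mvm_cmult F_def)
  qed
  have blocks_upto: "toeplitz_mvm (kf 0) i
      (\<lambda>t. \<Sum>j\<le>i. if t \<in> Omega j then fst (rec (ell - j) kf' (\<lambda>z. v (t # z))) y else 0) a
    = (\<Sum>j\<le>i. F j)"
  proof -
    have "y \<in> G (ell - j)" if "j \<le> i" for j
      using i(3) sparse_grid_mono[of "ell - i" "ell - j" d'] diff_le_mono2[OF that]
      unfolding G_def by blast
    then show ?thesis
      by (simp add: toeplitz_mvm_sum toeplitz_mvm_restrict rec_G F_def)
  qed
  have "{..ell} = {..i} \<union> {i<..ell}" "{..i} \<inter> {i<..ell} = {}"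
    using i(1) by auto
  then have "(\<Sum>j\<le>ell. F j) = (\<Sum>j\<le>i. F j) + (\<Sum>j\<in>{i<..ell}. F j)"
    by (simp add: sum.union_disjoint)
  moreover have "kernel_mvm kf (sparse_grid ell (Suc d')) v x = (\<Sum>j\<le>ell. F j)"
    unfolding xy F_def kf'_def G_def
    using length_sparse_grid[OF i(3)] by (rule kernel_mvm_sparse_grid_Suc)
  ultimately show "fst (sg_step rec d' ell kf v) x = kernel_mvm kf (sparse_grid ell (Suc d')) v x"
    using fst_sg_step_Cons[OF i(1,2)] blocks_above blocks_upto unfolding xy kf'_def G_def by simp
qed

lemma computes_kernel_mvm_sg_mvm_1: "computes_kernel_mvm (Suc 0) (sg_mvm (Suc 0))"
  unfolding computes_kernel_mvm_def
proof (intro allI ballI)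
  fix ell :: nat and kf :: "nat \<Rightarrow> real \<Rightarrow> real" and v :: "real list \<Rightarrow> real" and x
  assume "x \<in> sparse_grid ell (Suc 0)"
  then obtain a where x: "x = [a]"
    using length_sparse_grid by (metis length_0_conv length_Suc_conv)
  have "kernel_mvm kf (sparse_grid ell (Suc 0)) v [a] = (\<Sum>j\<le>ell. \<Sum>s\<in>Omega j.
      kf 0 (a - s) * kernel_mvm (\<lambda>j. kf (Suc j)) (sparse_grid (ell - j) 0) (\<lambda>z. v (s # z)) [])"
    by (rule kernel_mvm_sparse_grid_Suc) simp
  also have "\<dots> = (\<Sum>j\<le>ell. \<Sum>s\<in>Omega j. kf 0 (a - s) * v [s])"
    by (simp add: sparse_grid_0 kernel_mvm_def prod_kernel_def)
  finally show "fst (sg_mvm (Suc 0) ell kf v) x = kernel_mvm kf (sparse_grid ell (Suc 0)) v x"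
    unfolding x by (simp add: toeplitz_mvm_def sum_grid1)
qed

lemma computes_kernel_mvm_sg_mvm: "computes_kernel_mvm (Suc e) (sg_mvm (Suc e))"
proof (induction e)
  case 0
  show ?case by (rule computes_kernel_mvm_sg_mvm_1)
next
  case (Suc e)
  have "sg_mvm (Suc (Suc e)) = sg_step (sg_mvm (Suc e)) (Suc e)"
    by (intro ext) simp
  then show ?case
    using computes_kernel_mvm_sg_step[OF Suc.IH] by (simp only:)
qed

lemma sum_bounded_above_atMost:
  assumes "A \<subseteq> {..n}" "\<And>i. i \<in> A \<Longrightarrow> f i \<le> K"
  shows "sum f A \<le> (n+1) * (K::nat)"
proof -
  have "sum f A \<le> card A * K"
    using sum_bounded_above[of A f K] assms(2) by simp
  also have "\<dots> \<le> (n+1) * K"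
    using card_mono[OF finite_atMost assms(1)] by (intro mult_le_mono1) simp
  finally show ?thesis .
qed

lemma pow2_mult_card_sparse_grid_le:
  assumes "i \<le> j" "j \<le> ell"
  shows "2^i * card (sparse_grid (ell - j) (Suc e)) \<le> 2 * (ell+1)^e * 2^ell"
proof -
  have "2^i * card (sparse_grid (ell - j) (Suc e)) \<le> 2^i * (2 * (ell-j+1)^e * 2^(ell-j))"
    by (intro mult_le_mono2 card_sparse_grid_le)
  also have "\<dots> \<le> 2 * (ell+1)^e * 2^ell"
    using assms by (intro pow2_mult_growth_le) auto
  finally show ?thesis .
qed

lemma card_Omega_mult_card_sparse_grid_le:
  "i \<le> j \<Longrightarrow> j \<le> ell \<Longrightarrow>
     card (Omega i) * card (sparse_grid (ell - j) (Suc e)) \<le> 2 * (ell+1)^e * 2^ell"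
  using mult_le_mono1[OF card_Omega_le] pow2_mult_card_sparse_grid_le order_trans by blast

lemma sum_Omega_growth_le:
  assumes "\<And>i x. i \<le> ell \<Longrightarrow> f i x \<le> C * (ell-i+1)^k * 2^(ell-i)"
  shows "(\<Sum>i\<le>ell. \<Sum>x\<in>Omega i. f i x) \<le> (ell+1) * (C * (ell+1)^k * 2^ell)"
proof (rule sum_bounded_above_atMost)
  fix i assume "i \<in> {..ell}"
  then have "(\<Sum>x\<in>Omega i. f i x) \<le> card (Omega i) * (C * (ell-i+1)^k * 2^(ell-i))"
    using assms by (intro sum_bounded_above[where 'a = nat, unfolded of_nat_id]) auto
  also have "\<dots> \<le> 2^i * (C * (ell-i+1)^k * 2^(ell-i))"
    by (intro mult_le_mono1 card_Omega_le)
  also have "\<dots> \<le> C * (ell+1)^k * 2^ell"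
    using \<open>i \<in> {..ell}\<close> by (intro pow2_mult_growth_le) auto
  finally show "(\<Sum>x\<in>Omega i. f i x) \<le> C * (ell+1)^k * 2^ell" .
qed simp

lemma sum_toeplitz_cost_le:
  "(\<Sum>i\<le>ell. card (sparse_grid (ell - i) (Suc e)) * toeplitz_cost i)
     \<le> (ell+1) * (4 * (ell+1)^Suc e * 2^ell)"
proof (rule sum_bounded_above_atMost)
  fix i assume "i \<in> {..ell}"
  have "card (sparse_grid (ell - i) (Suc e)) * toeplitz_cost i
      = 2 * (i+1) * (2^i * card (sparse_grid (ell - i) (Suc e)))"
    unfolding toeplitz_cost_def by (simp add: algebra_simps)
  also have "\<dots> \<le> 2 * (ell+1) * (2 * (ell+1)^e * 2^ell)"
    using \<open>i \<in> {..ell}\<close> by (intro mult_le_mono pow2_mult_card_sparse_grid_le) auto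
  also have "\<dots> = 4 * (ell+1)^Suc e * 2^ell"
    by (simp add: algebra_simps)
  finally show "card (sparse_grid (ell - i) (Suc e)) * toeplitz_cost i \<le> 4 * (ell+1)^Suc e * 2^ell" .
qed simp

lemma sg_step_cost_le:
  assumes "\<And>m kf w. snd (rec m kf w) \<le> C * (m+1)^Suc e * 2^m"
  shows "snd (sg_step rec (Suc e) ell kf v) \<le> (14 + 2*C) * (ell+1)^Suc (Suc e) * 2^ell"
proof -
  let ?G = "\<lambda>m. sparse_grid m (Suc e)"
  let ?S = "(ell+1) * ((ell+1) * (2 * (ell+1)^e * 2^ell))"
  have cost_above: "(\<Sum>i\<le>ell. \<Sum>j\<in>{i<..ell}. card (Omega i) * card (?G (ell - j))) \<le> ?S"
    by (intro sum_bounded_above_atMost card_Omega_mult_card_sparse_grid_le) auto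
  have cost_upto: "(\<Sum>i\<le>ell. \<Sum>j\<le>i. card (Omega j) * card (?G (ell - i))) \<le> ?S"
    by (intro sum_bounded_above_atMost card_Omega_mult_card_sparse_grid_le) auto
  have "(\<Sum>i\<le>ell. card (Omega i) * card (?G (ell - i))) \<le> (ell+1) * (2 * (ell+1)^e * 2^ell)"
    by (intro sum_bounded_above_atMost card_Omega_mult_card_sparse_grid_le) auto
  also have "\<dots> \<le> ?S" by simp
  finally have cost_diagonal: "(\<Sum>i\<le>ell. card (Omega i) * card (?G (ell - i))) \<le> ?S" .
  have "snd (sg_step rec (Suc e) ell kf v) \<le>
      (ell+1) * (4 * (ell+1)^Suc e * 2^ell) + (ell+1) * (C * (ell+1)^Suc e * 2^ell) + ?S
      + (ell+1) * (C * (ell+1)^Suc e * 2^ell) + ?S + (ell+1) * (4 * (ell+1)^Suc e * 2^ell) + ?S"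
    unfolding sg_step_def Let_def snd_conv
    by (intro add_mono sum_toeplitz_cost_le sum_Omega_growth_le assms cost_above cost_upto cost_diagonal)
  also have "\<dots> = (14 + 2*C) * (ell+1)^Suc (Suc e) * 2^ell"
    by (simp add: algebra_simps)
  finally show ?thesis .
qed

lemma sg_mvm_cost_le: "\<exists>C. \<forall>m kf v. snd (sg_mvm (Suc e) m kf v) \<le> C * (m+1)^Suc e * 2^m"
proof (induction e)
  case 0
  show ?case
    by (rule exI[of _ 2]) (simp add: toeplitz_cost_def)
next
  case (Suc e)
  then obtain C where "\<And>m kf v. snd (sg_mvm (Suc e) m kf v) \<le> C * (m+1)^Suc e * 2^m"
    by blast
  then have "snd (sg_mvm (Suc (Suc e)) m kf v) \<le> (14 + 2*C) * (m+1)^Suc (Suc e) * 2^m" for m kf v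
    using sg_step_cost_le by simp
  then show ?case by blast
qed

theorem theorem1:
  fixes d :: nat
  assumes "d \<ge> 1"
  shows "(\<forall>ell kf v. \<forall>x\<in>sparse_grid ell d.
            fst (sg_mvm d ell kf v) x = kernel_mvm kf (sparse_grid ell d) v x)
       \<and> (\<exists>C::real. \<forall>ell\<ge>1. \<forall>kf v.
            real (snd (sg_mvm d ell kf v)) \<le> C * real ell ^ d * 2 ^ ell)"
proof -
  obtain e where d: "d = Suc e" using assms by (cases d) auto
  obtain C where C: "\<And>m kf v. snd (sg_mvm d m kf v) \<le> C * (m+1)^d * 2^m"
    using sg_mvm_cost_le[of e] unfolding d by blast
  have "real (snd (sg_mvm d ell kf v)) \<le> (real C * 2^d) * real ell ^ d * 2^ell"
    if "ell \<ge> 1" for ell kf v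
  proof -
    have "snd (sg_mvm d ell kf v) \<le> C * (ell+1)^d * 2^ell" by (rule C)
    also have "\<dots> \<le> C * (2*ell)^d * 2^ell"
      using that by (intro mult_le_mono power_mono) auto
    also have "\<dots> = C * 2^d * ell^d * 2^ell" by (simp add: power_mult_distrib)
    finally have "real (snd (sg_mvm d ell kf v)) \<le> real (C * 2^d * ell^d * 2^ell)"
      by (simp only: of_nat_le_iff)
    then show ?thesis
      by simp
  qed
  then show ?thesis
    using computes_kernel_mvm_sg_mvm[of e] unfolding d computes_kernel_mvm_def by blast
qed

end
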